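(* Let $\mathbf t_1,\mathbf t_2$ be hyper-terms with $\mathrm{supp}(\mathbf t_1)\cap\mathrm{supp}(\mathbf t_2)=\emptyset$ and $Q$ a post hyper-assertion. Then $$\mathrm{wp}\,\mathbf t_1\,\{\lambda\mathbf v.\ \mathrm{wp}\,\mathbf t_2\,\{\lambda\mathbf w.\ Q(\mathbf v\uplus\mathbf w)\}\}\ \dashv\vdash\ \mathrm{wp}\,(\mathbf t_1\uplus\mathbf t_2)\,\{Q\}.$$
   Context: Setting. $\mathrm{Val}=\mathbb{Z}$; $\mathrm{PVar}$ is a countably infinite set of program variables; a store is a function $s:\mathrm{PVar}\to\mathrm{Val}$; indices are $\mathrm{Idx}=\mathbb{N}$. Terms of a first-order imperative language are generated by $t ::= v \mid x \mid * \mid t\oplus t \mid \mathtt{skip}\mid x:=t \mid t;t \mid \mathtt{if}\ t\ \mathtt{then}\ t\ \mathtt{else}\ t \mid \mathtt{while}\ t\ \mathtt{do}\ t$, with a nondeterministic big-step semantics $t,s\Downarrow v,s'$. A hyper-term $\mathbf t$ is a finitely supported partial function from $\mathrm{Idx}$ to terms; a hyper-store is a total function $\mathbf s:\mathrm{Idx}\to\mathrm{Store}$; a hyper-return-value is a finitely supported partial function $\mathbf v:\mathrm{Idx}\rightharpoonup\mathrm{Val}$. $\uplus$ denotes union of partial maps with disjoint supports. $\mathbf t,\mathbf s\Downarrow\mathbf v,\mathbf s'$ holds iff for every $i\in\mathrm{supp}(\mathbf t)$, $\mathbf t(i),\mathbf s(i)\Downarrow\mathbf v(i),\mathbf s'(i)$,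 and for every $i\notin\mathrm{supp}(\mathbf t)$, $\mathbf s'(i)=\mathbf s(i)$ and $\mathbf v(i)$ is undefined. A hyper-assertion is a predicate on hyper-stores; a post hyper-assertion is an upward-closed map $Q$ from hyper-return-values to hyper-assertions (if $Q(\mathbf v)(\mathbf s)$ and $\mathbf v'$ agrees with $\mathbf v$ on $\mathrm{supp}(\mathbf v)$ then $Q(\mathbf v')(\mathbf s)$). $P\dashv\vdash R$ means $\forall\mathbf s.\ P(\mathbf s)\Leftrightarrow R(\mathbf s)$. $\mathrm{wp}\,\mathbf t\,\{Q\}(\mathbf s):\iff\forall\mathbf v,\mathbf s'.\ (\mathbf t,\mathbf s\Downarrow\mathbf v,\mathbf s')\Rightarrow Q(\mathbf v)(\mathbf s')$. *)

theory Defs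
  imports Main
begin

type_synonym val = int
type_synonym pvar = nat
type_synonym store = "pvar \<Rightarrow> val"
type_synonym idx = nat

text \<open>Terms. The binary operator of t (+) t is carried as an arbitrary function on values.\<close>
datatype "term" =
    Val val
  | Var pvar
  | Star
  | BinOp "val \<Rightarrow> val \<Rightarrow> val" "term" "term"
  | Skip
  | Assign pvar "term"
  | Seq "term" "term"
  | If "term" "term" "term"
  | While "term" "term"

text \<open>Nondeterministic big-step semantics t,s \<Down> v,s'. Conventions: a condition is true iff
  its value is nonzero; skip and a terminated loop return 0; x:=t returns the assigned value.\<close>
inductive bigstep :: "term \<Rightarrow> store \<Rightarrow> val \<Rightarrow> store \<Rightarrow> bool" where
  BVal: "bigstep (Val v) s v s"
| BVar: "bigstep (Var x) s (s x) s"
| BStar: "bigstep Star s v s"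
| BBin: "\<lbrakk>bigstep t1 s v1 s1; bigstep t2 s1 v2 s2\<rbrakk> \<Longrightarrow> bigstep (BinOp f t1 t2) s (f v1 v2) s2"
| BSkip: "bigstep Skip s 0 s"
| BAssign: "bigstep t s v s1 \<Longrightarrow> bigstep (Assign x t) s v (s1(x := v))"
| BSeq: "\<lbrakk>bigstep t1 s v1 s1; bigstep t2 s1 v2 s2\<rbrakk> \<Longrightarrow> bigstep (Seq t1 t2) s v2 s2"
| BIfT: "\<lbrakk>bigstep c s b s1; b \<noteq> 0; bigstep t1 s1 v s2\<rbrakk> \<Longrightarrow> bigstep (If c t1 t2) s v s2"
| BIfF: "\<lbrakk>bigstep c s 0 s1; bigstep t2 s1 v s2\<rbrakk> \<Longrightarrow> bigstep (If c t1 t2) s v s2"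
| BWhileF: "bigstep c s 0 s1 \<Longrightarrow> bigstep (While c t) s 0 s1"
| BWhileT: "\<lbrakk>bigstep c s b s1; b \<noteq> 0; bigstep t s1 u s2; bigstep (While c t) s2 v s3\<rbrakk>
             \<Longrightarrow> bigstep (While c t) s v s3"

text \<open>Hyper-terms and hyper-return-values are partial maps Idx \<rightharpoonup> _ (finite support is
  imposed where relevant); hyper-stores are total maps.\<close>
type_synonym hterm = "idx \<rightharpoonup> term"
type_synonym hstore = "idx \<Rightarrow> store"
type_synonym hval = "idx \<rightharpoonup> val"
type_synonym hassn = "hstore \<Rightarrow> bool"
type_synonym hpost = "hval \<Rightarrow> hassn"

definition hbigstep :: "hterm \<Rightarrow> hstore \<Rightarrow> hval \<Rightarrow> hstore \<Rightarrow> bool" where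
  "hbigstep t s v s' \<longleftrightarrow>
     (\<forall>i\<in>dom t. \<exists>u. v i = Some u \<and> bigstep (the (t i)) (s i) u (s' i)) \<and>
     (\<forall>i. i \<notin> dom t \<longrightarrow> s' i = s i \<and> v i = None)"

text \<open>Disjoint union of partial maps (used only on maps with disjoint supports).\<close>
definition dunion :: "(idx \<rightharpoonup> 'a) \<Rightarrow> (idx \<rightharpoonup> 'a) \<Rightarrow> (idx \<rightharpoonup> 'a)" (infixl "\<uplus>" 65) where
  "f \<uplus> g = f ++ g"

definition post_hassn :: "hpost \<Rightarrow> bool" where
  "post_hassn Q \<longleftrightarrow>
     (\<forall>v v' s. finite (dom v) \<and> finite (dom v') \<and> Q v s \<and> v \<subseteq>\<^sub>m v' \<longrightarrow> Q v' s)"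

definition bientails :: "hassn \<Rightarrow> hassn \<Rightarrow> bool" (infix "\<stileturn>\<turnstile>" 50) where
  "P \<stileturn>\<turnstile> R \<longleftrightarrow> (\<forall>s. P s = R s)"

definition wp :: "hterm \<Rightarrow> hpost \<Rightarrow> hassn" where
  "wp t Q s \<longleftrightarrow> (\<forall>v s'. hbigstep t s v s' \<longrightarrow> Q v s')"

end

theory Submission
  imports Defs
begin

text \<open>Running two hyper-terms with disjoint supports one after the other is the same as running
  their union: the components of \<open>t\<^sub>2\<close> see stores that \<open>t\<^sub>1\<close> has left untouched, and the components
  of \<open>t\<^sub>1\<close> are not touched afterwards by \<open>t\<^sub>2\<close>. So the executions of \<open>t\<^sub>1 \<uplus> t\<^sub>2\<close> are exactly
  the compositions of an execution of \<open>t\<^sub>1\<close> with one of \<open>t\<^sub>2\<close>, and unfolding \<open>wp\<close> gives the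
  equivalence.\<close>

lemma hbigstep_outside_dom:
  assumes "hbigstep t s v s'" and "i \<notin> dom t"
  shows "s' i = s i" and "v i = None"
  using assms unfolding hbigstep_def by auto

lemma hbigstep_in_dom:
  assumes "hbigstep t s v s'" and "i \<in> dom t"
  obtains u where "v i = Some u" and "bigstep (the (t i)) (s i) u (s' i)"
  using assms unfolding hbigstep_def by blast

lemma hbigstep_dom: "hbigstep t s v s' \<Longrightarrow> dom v = dom t"
  unfolding hbigstep_def by fastforce

lemma dom_dunion [simp]: "dom (f \<uplus> g) = dom f \<union> dom g"
  by (auto simp: dunion_def)

lemma dunion_apply_left: "i \<notin> dom g \<Longrightarrow> (f \<uplus> g) i = f i"
  and dunion_apply_right: "i \<in> dom g \<Longrightarrow> (f \<uplus> g) i = g i"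
  by (simp_all add: dunion_def map_add_dom_app_simps)

lemma hbigstep_dunion_compose:
  assumes disj: "dom t1 \<inter> dom t2 = {}"
    and B1: "hbigstep t1 s v1 s1" and B2: "hbigstep t2 s1 v2 s2"
  shows "hbigstep (t1 \<uplus> t2) s (v1 \<uplus> v2) s2"
  unfolding hbigstep_def
proof (intro conjI allI impI ballI)
  fix i assume "i \<in> dom (t1 \<uplus> t2)"
  then consider "i \<in> dom t1" "i \<notin> dom t2" | "i \<in> dom t2" "i \<notin> dom t1"
    using disj by auto
  then show "\<exists>u. (v1 \<uplus> v2) i = Some u \<and> bigstep (the ((t1 \<uplus> t2) i)) (s i) u (s2 i)"
  proof cases
    case 1
    with B1 obtain u where "v1 i = Some u" "bigstep (the (t1 i)) (s i) u (s1 i)"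
      by (auto elim: hbigstep_in_dom)
    moreover have "v2 i = None" "s2 i = s1 i"
      using hbigstep_outside_dom[OF B2 \<open>i \<notin> dom t2\<close>] by simp_all
    moreover have "(t1 \<uplus> t2) i = t1 i"
      using \<open>i \<notin> dom t2\<close> by (rule dunion_apply_left)
    ultimately show ?thesis
      by (simp add: dunion_apply_left domIff)
  next
    case 2
    with B2 obtain u where "v2 i = Some u" "bigstep (the (t2 i)) (s1 i) u (s2 i)"
      by (auto elim: hbigstep_in_dom)
    moreover have "s1 i = s i"
      using hbigstep_outside_dom[OF B1 \<open>i \<notin> dom t1\<close>] by simp
    moreover have "(t1 \<uplus> t2) i = t2 i" "(v1 \<uplus> v2) i = v2 i"
      using 2 \<open>v2 i = Some u\<close> by (simp_all add: dunion_apply_right domIff)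
    ultimately show ?thesis
      by simp
  qed
next
  fix i assume "i \<notin> dom (t1 \<uplus> t2)"
  then have "i \<notin> dom t1" "i \<notin> dom t2" by auto
  then show "s2 i = s i" "(v1 \<uplus> v2) i = None"
    using hbigstep_outside_dom[OF B1] hbigstep_outside_dom[OF B2]
    by (simp_all add: dunion_def map_add_def)
qed

text \<open>The intermediate hyper-store runs \<open>t\<^sub>1\<close>'s components to their final states and leaves all
  others at their initial states.\<close>

lemma hbigstep_dunion_split:
  assumes disj: "dom t1 \<inter> dom t2 = {}" and B: "hbigstep (t1 \<uplus> t2) s v s'"
  shows "hbigstep t1 s (v |` dom t1) (\<lambda>i. if i \<in> dom t1 then s' i else s i)"
    and "hbigstep t2 (\<lambda>i. if i \<in> dom t1 then s' i else s i) (v |` dom t2) s'"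
    and "v = v |` dom t1 \<uplus> v |` dom t2"
proof -
  have t1_app: "(t1 \<uplus> t2) i = t1 i" if "i \<in> dom t1" for i
    using that disj by (intro dunion_apply_left) blast
  have t2_app: "(t1 \<uplus> t2) i = t2 i" if "i \<in> dom t2" for i
    using that by (simp add: dunion_apply_right)
  show "hbigstep t1 s (v |` dom t1) (\<lambda>i. if i \<in> dom t1 then s' i else s i)"
    unfolding hbigstep_def
  proof (intro conjI allI impI ballI)
    fix i assume "i \<in> dom t1"
    then show "\<exists>u. (v |` dom t1) i = Some u \<and>
        bigstep (the (t1 i)) (s i) u (if i \<in> dom t1 then s' i else s i)"
      using hbigstep_in_dom[OF B, of i] t1_app by auto
  qed simp_all
  show "hbigstep t2 (\<lambda>i. if i \<in> dom t1 then s' i else s i) (v |` dom t2) s'"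
    unfolding hbigstep_def
  proof (intro conjI allI impI ballI)
    fix i assume "i \<in> dom t2"
    moreover from this disj have "i \<notin> dom t1" by blast
    ultimately show "\<exists>u. (v |` dom t2) i = Some u \<and>
        bigstep (the (t2 i)) (if i \<in> dom t1 then s' i else s i) u (s' i)"
      using hbigstep_in_dom[OF B, of i] t2_app by auto
  next
    fix i assume "i \<notin> dom t2"
    then show "s' i = (if i \<in> dom t1 then s' i else s i)" "(v |` dom t2) i = None"
      using hbigstep_outside_dom[OF B, of i] by auto
  qed
  show "v = v |` dom t1 \<uplus> v |` dom t2"
  proof
    fix i
    have dom_v: "dom v = dom t1 \<union> dom t2"
      using hbigstep_dom[OF B] by simp
    show "v i = (v |` dom t1 \<uplus> v |` dom t2) i"
    proof (cases "i \<in> dom t2")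
      case True
      with dom_v have "i \<in> dom (v |` dom t2)" by simp
      with True show ?thesis by (simp add: dunion_apply_right)
    next
      case False
      then have "i \<notin> dom (v |` dom t2)" by simp
      with False dom_v show ?thesis
        by (auto simp: dunion_apply_left restrict_map_def)
    qed
  qed
qed

lemma hbigstep_dunion_iff:
  assumes "dom t1 \<inter> dom t2 = {}"
  shows "hbigstep (t1 \<uplus> t2) s v s' \<longleftrightarrow>
    (\<exists>v1 s1 v2. hbigstep t1 s v1 s1 \<and> hbigstep t2 s1 v2 s' \<and> v = v1 \<uplus> v2)"
proof
  assume "hbigstep (t1 \<uplus> t2) s v s'"
  from hbigstep_dunion_split[OF assms this]
  show "\<exists>v1 s1 v2. hbigstep t1 s v1 s1 \<and> hbigstep t2 s1 v2 s' \<and> v = v1 \<uplus> v2"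
    by blast
qed (auto intro: hbigstep_dunion_compose[OF assms])

lemma wp_dunion:
  assumes "dom t1 \<inter> dom t2 = {}"
  shows "wp t1 (\<lambda>v. wp t2 (\<lambda>w. Q (v \<uplus> w))) s \<longleftrightarrow> wp (t1 \<uplus> t2) Q s"
  unfolding wp_def hbigstep_dunion_iff[OF assms] by blast

theorem mainTheorem8:
  fixes t1 t2 :: hterm and Q :: hpost
  assumes "finite (dom t1)" and "finite (dom t2)"
    and "dom t1 \<inter> dom t2 = {}"
    and "post_hassn Q"
  shows "wp t1 (\<lambda>v. wp t2 (\<lambda>w. Q (v \<uplus> w))) \<stileturn>\<turnstile> wp (t1 \<uplus> t2) Q"
  unfolding bientails_def using wp_dunion[OF assms(3)] by blast

end
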